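(* Let $n\ge 2$ and let $X^n=\{x_1,\dots,x_n\}$ be the fence of $n$ points, i.e. the poset whose strict order relations are exactly $x_i<x_{i+1}$ for odd $i$ and $x_i>x_{i+1}$ for even $i$ ($1\le i\le n-1$), so $x_1<x_2>x_3<x_4>\cdots$. Then $\det(X^n_M-\lambda I)=(-1)^n\lambda(\lambda-(n-2))(\lambda+1)^{n-2}$.
   Context: For a finite poset $X=\{x_1,\dots,x_n\}$, $X_M=(x_{i,j})$ is the $n\times n$ matrix with $x_{i,j}=0$ if $x_i\le x_j$ and $x_{i,j}=1$ otherwise. The characteristic polynomial is taken as $p_X(\lambda)=\det(X_M-\lambda I)$. *)

theory Defs
  imports "Jordan_Normal_Form.Char_Poly"
begin

definition fence_le :: "nat \<Rightarrow> nat \<Rightarrow> bool" where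
  "fence_le i j \<longleftrightarrow> i = j \<or> (odd i \<and> j = i + 1) \<or> (even j \<and> i = j + 1)"

text \<open>The matrix X_M: entry (i,j) is 0 if x_i \<le> x_j and 1 otherwise
  (0-based matrix indices, point k+1 at index k).\<close>
definition fence_matrix :: "nat \<Rightarrow> int mat" where
  "fence_matrix n = mat n n (\<lambda>(i, j). if fence_le (i + 1) (j + 1) then 0 else 1)"

definition poset_char_poly :: "int mat \<Rightarrow> int poly" where
  "poset_char_poly A = det (map_mat (\<lambda>a. [:a:]) A - [:0, 1:] \<cdot>\<^sub>m 1\<^sub>m (dim_row A))"

end

theory Submission
  imports Defs
begin

text \<open>Write \<mu> = \<lambda> + 1 and let N be the 0/1 matrix of the strict order of the fence, so that
  X_M - \<lambda>I = J - \<mu>I - N with J the all-ones matrix. Every strict relation goes from a minimal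
  to a maximal point, hence N^2 = 0 and (J - \<mu>I - N)(\<mu>I - N) = J(\<mu>I - N) - \<mu>^2 I: a scalar
  matrix plus a matrix with identical rows, whose determinant is
  (-\<mu>^2)^(n-1) (-\<mu>^2 + n\<mu> - (n - 1)), since N has n - 1 nonzero entries. Splitting N into
  its strictly upper and lower triangular parts U and L gives UL = 0, so
  (\<mu>I - U)(\<mu>I - L) = \<mu>(\<mu>I - N) and det(\<mu>I - N) = \<mu>^n. Dividing by \<mu>^n and factoring the
  quadratic in \<mu> gives the claim.\<close>

lemma det_mat_upper_triangular:
  assumes "\<And>i j. j < i \<Longrightarrow> i < n \<Longrightarrow> f (i, j) = 0"
  shows "det (mat n n f) = (\<Prod>i<n. f (i, i))"
  using assms by (subst det_upper_triangular[of _ n])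
    (auto simp: upper_triangular_def prod_list_diag_prod atLeast0LessThan)

lemma det_mat_lower_triangular:
  assumes "\<And>i j. i < j \<Longrightarrow> j < n \<Longrightarrow> f (i, j) = 0"
  shows "det (mat n n f) = (\<Prod>i<n. f (i, i))"
  using assms by (subst det_lower_triangular[of n])
    (auto simp: prod_list_diag_prod atLeast0LessThan)

lemma det_scalar_add_repeated_row:
  fixes a :: "'a::comm_ring_1" and v :: "nat \<Rightarrow> 'a"
  assumes "n > 0"
  shows "det (mat n n (\<lambda>(i, j). (if i = j then a else 0) + v j)) =
    a ^ (n - 1) * (a + (\<Sum>j<n. v j))"
proof -
  define R where "R = mat n n (\<lambda>(i, j). (if i = j then a else 0) + v j)"
  \<comment> \<open>D subtracts from each row the next one, T replaces each column by the sum of the columns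
    up to it; D R T is lower triangular with diagonal a, ..., a, a + \<Sum>v.\<close>
  define D :: "'a mat" where "D = mat n n (\<lambda>(i, j). of_bool (i = j) - of_bool (j = i + 1))"
  define T :: "'a mat" where "T = mat n n (\<lambda>(i, j). of_bool (i \<le> j))"
  define F where "F = mat n n (\<lambda>(i, j). if i + 1 < n then (if i = j then a else 0)
    else (if j = i then a else 0) + (\<Sum>k\<le>j. v k))"
  have dimR [simp]: "dim_row R = n" "dim_col R = n" by (simp_all add: R_def)
  have DR: "D * R = mat n n (\<lambda>(i, j).
    if i + 1 < n then (if i = j then a else 0) - (if j = i + 1 then a else 0)
    else (if i = j then a else 0) + v j)" (is "_ = ?E")
  proof (rule eq_matI)
    fix i j assume "i < dim_row ?E" "j < dim_col ?E"
    then have ij: "i < n" "j < n" by auto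
    have "(D * R) $$ (i, j) =
        (\<Sum>k<n. (if k = i then R $$ (k, j) else 0) - (if k = i + 1 then R $$ (k, j) else 0))"
      using ij by (auto simp: D_def scalar_prod_def col_def lessThan_atLeast0 left_diff_distrib
        intro!: sum.cong)
    then show "(D * R) $$ (i, j) = ?E $$ (i, j)"
      using ij by (auto simp: sum_subtractf sum.delta' R_def)
  qed (auto simp: D_def R_def)
  have DRT: "D * R * T = F"
  proof (rule eq_matI)
    fix i j assume "i < dim_row F" "j < dim_col F"
    then have ij: "i < n" "j < n" by (auto simp: F_def)
    have "(D * R * T) $$ (i, j) = (\<Sum>k\<in>{k\<in>{..<n}. k \<le> j}. (D * R) $$ (i, k))"
      using ij by (auto simp: DR T_def scalar_prod_def col_def lessThan_atLeast0 sum.inter_filter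
        intro!: sum.cong)
    also have "{k\<in>{..<n}. k \<le> j} = {..j}"
      using ij by auto
    finally show "(D * R * T) $$ (i, j) = F $$ (i, j)"
      using ij by (auto simp: DR F_def sum_subtractf sum.distrib sum.delta')
  qed (auto simp: D_def T_def F_def)
  have "det D = 1"
    unfolding D_def by (subst det_mat_upper_triangular) auto
  moreover have "det T = 1"
    unfolding T_def by (subst det_mat_upper_triangular) auto
  moreover have "D \<in> carrier_mat n n" "R \<in> carrier_mat n n" "T \<in> carrier_mat n n"
    by (simp_all add: D_def R_def T_def)
  ultimately have "det R = det F"
    by (simp flip: DRT add: det_mult)
  also have "det F = a ^ (n - 1) * (a + (\<Sum>j<n. v j))"
  proof -
    obtain m where "n = Suc m" using assms by (cases n) auto
    then show ?thesis
      unfolding F_def by (subst det_mat_lower_triangular)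
        (auto simp: prod.lessThan_Suc lessThan_Suc_atMost[symmetric])
  qed
  finally show ?thesis
    unfolding R_def .
qed

definition bipartite_mat :: "'a::zero mat \<Rightarrow> (nat \<Rightarrow> bool) \<Rightarrow> bool" where
  "bipartite_mat N S \<longleftrightarrow>
    (\<forall>i<dim_row N. \<forall>j<dim_col N. N $$ (i, j) \<noteq> 0 \<longrightarrow> S i \<and> \<not> S j)"

lemma bipartite_mat_entry_product_eq_0:
  assumes "bipartite_mat N S" "N \<in> carrier_mat n n" "i < n" "k < n" "j < n"
  shows "N $$ (i, k) * N $$ (k, j) = (0 :: 'a::semiring_0)"
proof (cases "N $$ (i, k) = 0")
  case False
  then have "\<not> S k"
    using assms unfolding bipartite_mat_def by auto
  then have "N $$ (k, j) = 0"
    using assms unfolding bipartite_mat_def by auto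
  then show ?thesis
    by simp
qed simp

lemma bipartite_mat_square_eq_0:
  fixes N :: "'a::semiring_0 mat"
  assumes "bipartite_mat N S" "N \<in> carrier_mat n n"
  shows "N * N = 0\<^sub>m n n"
  using assms bipartite_mat_entry_product_eq_0[OF assms]
  by (intro eq_matI) (auto simp: scalar_prod_def col_def)

lemma det_scalar_minus_bipartite_mat:
  fixes N :: "'a::idom mat"
  assumes bip: "bipartite_mat N S" and N: "N \<in> carrier_mat n n" and "mu \<noteq> 0"
  shows "det (mu \<cdot>\<^sub>m 1\<^sub>m n - N) = mu ^ n"
proof -
  define U where "U = (\<lambda>i j. if i < j then N $$ (i, j) else 0)"
  define L where "L = (\<lambda>i j. if j < i then N $$ (i, j) else 0)"
  define A where "A = mat n n (\<lambda>(i, j). (if i = j then mu else 0) - U i j)"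
  define B where "B = mat n n (\<lambda>(i, j). (if i = j then mu else 0) - L i j)"
  have UL: "U i k * L k j = 0" if "i < n" "k < n" "j < n" for i k j
    using bipartite_mat_entry_product_eq_0[OF bip N that] by (auto simp: U_def L_def)
  have [simp]: "U k k = 0" "L k k = 0" for k
    by (simp_all add: U_def L_def)
  have AB: "A * B = mu \<cdot>\<^sub>m (mu \<cdot>\<^sub>m 1\<^sub>m n - N)"
  proof (rule eq_matI)
    fix i j
    assume "i < dim_row (mu \<cdot>\<^sub>m (mu \<cdot>\<^sub>m 1\<^sub>m n - N))" "j < dim_col (mu \<cdot>\<^sub>m (mu \<cdot>\<^sub>m 1\<^sub>m n - N))"
    then have ij: "i < n" "j < n"
      using N by auto
    have "N $$ (i, i) = 0"
      using bip N ij unfolding bipartite_mat_def by auto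
    then have N_split: "N $$ (i, j) = U i j + L i j"
      by (auto simp: U_def L_def)
    have "(A * B) $$ (i, j) = (\<Sum>k<n. A $$ (i, k) * B $$ (k, j))"
      using ij by (simp add: A_def B_def scalar_prod_def lessThan_atLeast0)
    also have "\<dots> =
        (\<Sum>k<n. (if k = i then mu * B $$ (i, j) else 0) - (if k = j then mu * U i j else 0))"
    proof (rule sum.cong)
      fix k assume "k \<in> {..<n}"
      then show "A $$ (i, k) * B $$ (k, j) =
        (if k = i then mu * B $$ (i, j) else 0) - (if k = j then mu * U i j else 0)"
        using ij UL[of i k j] by (auto simp: A_def B_def algebra_simps)
    qed simp
    finally show "(A * B) $$ (i, j) = (mu \<cdot>\<^sub>m (mu \<cdot>\<^sub>m 1\<^sub>m n - N)) $$ (i, j)"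
      using ij N by (auto simp: sum_subtractf B_def N_split algebra_simps)
  qed (use N in \<open>simp_all add: A_def B_def\<close>)
  have "mu ^ n * det (mu \<cdot>\<^sub>m 1\<^sub>m n - N) = det (A * B)"
    using N by (simp add: AB)
  also have "\<dots> = det A * det B"
    by (rule det_mult[of _ n]) (simp_all add: A_def B_def)
  also have "det A = mu ^ n"
    unfolding A_def by (subst det_mat_upper_triangular) (auto simp: U_def)
  also have "det B = mu ^ n"
    unfolding B_def by (subst det_mat_lower_triangular) (auto simp: L_def)
  finally show ?thesis
    using \<open>mu \<noteq> 0\<close> by simp
qed

lemma det_ones_minus_scalar_minus_square_zero:
  fixes N :: "'a::comm_ring_1 mat"
  assumes N: "N \<in> carrier_mat n n" and NN: "N * N = 0\<^sub>m n n" and "n > 0"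
  shows "det (mat n n (\<lambda>_. 1) - mu \<cdot>\<^sub>m 1\<^sub>m n - N) * det (mu \<cdot>\<^sub>m 1\<^sub>m n - N) =
    (- mu\<^sup>2) ^ (n - 1) * (- mu\<^sup>2 + of_nat n * mu - (\<Sum>i<n. \<Sum>j<n. N $$ (i, j)))"
proof -
  define M where "M = mat n n (\<lambda>_. 1) - mu \<cdot>\<^sub>m 1\<^sub>m n - N"
  define P where "P = mu \<cdot>\<^sub>m 1\<^sub>m n - N"
  have carrier: "M \<in> carrier_mat n n" "P \<in> carrier_mat n n"
    using N by (auto simp: M_def P_def)
  have "M * P = mat n n (\<lambda>(i, j). (if i = j then - mu\<^sup>2 else 0) + (mu - (\<Sum>k<n. N $$ (k, j))))"
    (is "_ = ?Q")
  proof (rule eq_matI)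
    fix i j assume "i < dim_row ?Q" "j < dim_col ?Q"
    then have ij: "i < n" "j < n" by auto
    have P_entry: "P $$ (k, j) = (if k = j then mu else 0) - N $$ (k, j)" if "k < n" for k
      using that ij N by (simp add: P_def)
    have NN_entry: "(\<Sum>k<n. N $$ (i, k) * N $$ (k, j)) = 0"
      using arg_cong[OF NN, of "\<lambda>A. A $$ (i, j)"] ij N
      by (simp add: scalar_prod_def col_def lessThan_atLeast0)
    have "(M * P) $$ (i, j) = (\<Sum>k<n. M $$ (i, k) * P $$ (k, j))"
      using ij carrier by (simp add: scalar_prod_def col_def lessThan_atLeast0)
    also have "\<dots> = (\<Sum>k<n. P $$ (k, j) - (if k = i then mu * P $$ (i, j) else 0)
      - (if k = j then mu * N $$ (i, j) else 0) + N $$ (i, k) * N $$ (k, j))"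
      using ij N by (intro sum.cong) (auto simp: M_def P_def algebra_simps)
    also have "\<dots> = ?Q $$ (i, j)"
      unfolding sum.distrib NN_entry
      using ij by (simp add: sum_subtractf P_entry) (simp add: algebra_simps power2_eq_square)
    finally show "(M * P) $$ (i, j) = ?Q $$ (i, j)" .
  qed (simp_all add: carrier_matD[OF carrier(1)] carrier_matD[OF carrier(2)])
  then have "det M * det P = det ?Q"
    using det_mult[OF carrier] by simp
  also have "\<dots> = (- mu\<^sup>2) ^ (n - 1) * (- mu\<^sup>2 + (\<Sum>j<n. mu - (\<Sum>k<n. N $$ (k, j))))"
    by (rule det_scalar_add_repeated_row[OF \<open>n > 0\<close>])
  also have "(\<Sum>j<n. mu - (\<Sum>k<n. N $$ (k, j))) = of_nat n * mu - (\<Sum>i<n. \<Sum>j<n. N $$ (i, j))"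
    using sum.swap[of "\<lambda>i j. N $$ (i, j)" "{..<n}" "{..<n}"] by (simp add: sum_subtractf)
  finally show ?thesis
    by (simp only: M_def P_def add_diff_eq)
qed

text \<open>The strict order of the fence on 0-based indices: index i stands for the point x_(i+1),
  so the even indices are the minimal points.\<close>
definition fence_less :: "nat \<Rightarrow> nat \<Rightarrow> bool" where
  "fence_less i j \<longleftrightarrow> even i \<and> (j = i + 1 \<or> i = j + 1)"

lemma fence_le_Suc_Suc_iff: "i \<noteq> j \<Longrightarrow> fence_le (Suc i) (Suc j) \<longleftrightarrow> fence_less i j"
  unfolding fence_le_def fence_less_def by auto

lemma sum_fence_less:
  "(\<Sum>i<n. \<Sum>j<n. of_bool (fence_less i j)) = (of_nat (n - 1) :: 'a::semiring_1)"
proof (induction n)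
  case (Suc n)
  have border: "(\<Sum>j<n. of_bool (fence_less n j)) + (\<Sum>i<n. of_bool (fence_less i n)) =
      (of_bool (n > 0) :: 'a)"
  proof -
    have "(\<Sum>j<n. of_bool (fence_less n j)) = (\<Sum>j<n. of_bool (j = n - 1 \<and> even n) :: 'a)"
      by (intro sum.cong) (auto simp: fence_less_def)
    moreover have "(\<Sum>i<n. of_bool (fence_less i n)) = (\<Sum>i<n. of_bool (i = n - 1 \<and> odd n) :: 'a)"
      by (intro sum.cong) (auto simp: fence_less_def)
    ultimately show ?thesis
      by (cases "even n") (auto simp: sum.If_cases)
  qed
  have "(\<Sum>i<Suc n. \<Sum>j<Suc n. of_bool (fence_less i j)) =
      (\<Sum>i<n. \<Sum>j<n. of_bool (fence_less i j)) +
      ((\<Sum>j<n. of_bool (fence_less n j)) + (\<Sum>i<n. of_bool (fence_less i n))) +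
      (of_bool (fence_less n n) :: 'a)"
    by (simp only: sum.lessThan_Suc sum.distrib add_ac)
  also have "\<dots> = of_nat (Suc n - 1)"
    unfolding Suc.IH border by (cases n) (simp_all add: fence_less_def add.commute)
  finally show ?case .
qed simp

definition fence_strict_mat :: "nat \<Rightarrow> 'a::zero_neq_one mat" where
  "fence_strict_mat n = mat n n (\<lambda>(i, j). of_bool (fence_less i j))"

lemma fence_strict_mat_carrier: "fence_strict_mat n \<in> carrier_mat n n"
  by (simp add: fence_strict_mat_def)

lemma bipartite_fence_strict_mat: "bipartite_mat (fence_strict_mat n) even"
  unfolding bipartite_mat_def fence_strict_mat_def fence_less_def by auto

lemma sum_fence_strict_mat:
  "(\<Sum>i<n. \<Sum>j<n. fence_strict_mat n $$ (i, j)) = (of_nat (n - 1) :: 'a::semiring_1)"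
  unfolding sum_fence_less[symmetric] by (intro sum.cong refl) (simp add: fence_strict_mat_def)

lemma fence_char_mat:
  "map_mat (\<lambda>a. [:a:]) (fence_matrix n) - [:0, 1:] \<cdot>\<^sub>m 1\<^sub>m (dim_row (fence_matrix n)) =
    mat n n (\<lambda>_. 1) - [:1, 1:] \<cdot>\<^sub>m 1\<^sub>m n - fence_strict_mat n"
proof (rule eq_matI)
  let ?J = "mat n n (\<lambda>_. 1) - [:1, 1:] \<cdot>\<^sub>m 1\<^sub>m n - fence_strict_mat n :: int poly mat"
  fix i j assume "i < dim_row ?J" "j < dim_col ?J"
  then have "i < n" "j < n"
    by (simp_all add: fence_strict_mat_def)
  then show "(map_mat (\<lambda>a. [:a:]) (fence_matrix n) - [:0, 1:] \<cdot>\<^sub>m 1\<^sub>m (dim_row (fence_matrix n)))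
      $$ (i, j) = ?J $$ (i, j)"
    by (cases "i = j")
      (simp_all add: fence_matrix_def fence_strict_mat_def fence_le_Suc_Suc_iff one_pCons,
       simp add: fence_le_def fence_less_def)
qed (simp_all add: fence_matrix_def fence_strict_mat_def)

lemma neg_square_power_quadratic_factorization:
  fixes mu :: "'a::comm_ring_1"
  shows "(- mu\<^sup>2) ^ (m + 1) * (- mu\<^sup>2 + of_nat (m + 2) * mu - of_nat (m + 1)) =
    (-1) ^ (m + 2) * ((mu - 1) * (mu - of_nat (m + 1)) * mu ^ m) * mu ^ (m + 2)"
proof -
  have "- mu\<^sup>2 + of_nat (m + 2) * mu - of_nat (m + 1) = - ((mu - 1) * (mu - of_nat (m + 1)))"
    by (simp add: algebra_simps power2_eq_square)
  moreover have "(- mu\<^sup>2) ^ (m + 1) = (-1) ^ (m + 1) * (mu ^ m * mu ^ (m + 2))"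
  proof -
    have "(mu\<^sup>2) ^ (m + 1) = mu ^ (m + (m + 2))"
      unfolding power_mult[symmetric] by (simp add: mult_2)
    then show ?thesis
      unfolding power_minus[of "mu\<^sup>2"] power_add[of mu m, symmetric] by simp
  qed
  moreover have "(-1 :: 'a) ^ (m + 2) = - ((-1) ^ (m + 1))"
    by simp
  ultimately show ?thesis
    by (simp add: mult_ac)
qed

lemma fence_char_poly_shifted_factorization:
  assumes "n \<ge> 2"
  shows "(- [:1, 1:]\<^sup>2) ^ (n - 1) * (- [:1, 1:]\<^sup>2 + of_nat n * [:1, 1:] - of_nat (n - 1)) =
    [:(-1) ^ n:] * ([:0, 1:] * [:- (int n - 2), 1:] * [:1, 1:] ^ (n - 2)) * [:1, 1:] ^ n"
proof -
  define mu :: "int poly" where "mu = [:1, 1:]"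
  obtain m where n: "n = m + 2"
    using assms by (metis add.commute le_Suc_ex)
  have "(- mu\<^sup>2) ^ (n - 1) * (- mu\<^sup>2 + of_nat n * mu - of_nat (n - 1)) =
      (-1) ^ n * ((mu - 1) * (mu - of_nat (n - 1)) * mu ^ (n - 2)) * mu ^ n"
    using neg_square_power_quadratic_factorization[of mu m] by (simp add: n)
  also have "(-1) ^ n = [:(-1) ^ n:]"
    unfolding poly_const_pow[symmetric] by (simp add: one_pCons)
  also have "mu - 1 = [:0, 1:]"
    by (simp add: mu_def one_pCons)
  also have "mu - of_nat (n - 1) = [:- (int n - 2), 1:]"
    using assms by (simp add: mu_def of_nat_poly of_nat_diff)
  finally show ?thesis
    unfolding mu_def .
qed

theorem mainTheorem14:
  fixes n :: nat
  assumes "n \<ge> 2"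
  shows "poset_char_poly (fence_matrix n) =
    [:(-1) ^ n:] * ([:0, 1:] * [:- (int n - 2), 1:] * [:1, 1:] ^ (n - 2))"
proof -
  define mu :: "int poly" where "mu = [:1, 1:]"
  define N :: "int poly mat" where "N = fence_strict_mat n"
  have N: "N \<in> carrier_mat n n"
    unfolding N_def by (rule fence_strict_mat_carrier)
  have NN: "N * N = 0\<^sub>m n n"
    unfolding N_def
    by (rule bipartite_mat_square_eq_0[OF bipartite_fence_strict_mat fence_strict_mat_carrier])
  have "poset_char_poly (fence_matrix n) * mu ^ n =
      det (mat n n (\<lambda>_. 1) - mu \<cdot>\<^sub>m 1\<^sub>m n - N) * det (mu \<cdot>\<^sub>m 1\<^sub>m n - N)"
    unfolding poset_char_poly_def fence_char_mat mu_def N_def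
    by (simp add:
        det_scalar_minus_bipartite_mat[OF bipartite_fence_strict_mat fence_strict_mat_carrier])
  also have "\<dots> = (- mu\<^sup>2) ^ (n - 1) * (- mu\<^sup>2 + of_nat n * mu - of_nat (n - 1))"
    using det_ones_minus_scalar_minus_square_zero[OF N NN, of mu] assms
    by (simp add: N_def sum_fence_strict_mat)
  also have "\<dots> = [:(-1) ^ n:] * ([:0, 1:] * [:- (int n - 2), 1:] * mu ^ (n - 2)) * mu ^ n"
    unfolding mu_def by (rule fence_char_poly_shifted_factorization[OF assms])
  finally show ?thesis
    unfolding mu_def by (metis mult_right_cancel pCons_eq_0_iff power_not_zero zero_neq_one)
qed

end
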